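(* For every integer $k\ge 2$, $\Gamma_{\times k,t}(K_{k+1}\,\Box\,K_{k+1})=k(k+1)$.
   Context: A set $S\subseteq V(G)$ is a $k$-tuple total dominating set ($k$TDS) of a graph $G$ with $\delta(G)\ge k$ if $|N_G(x)\cap S|\ge k$ for every $x\in V(G)$. The upper $k$-tuple total domination number $\Gamma_{\times k,t}(G)$ is the maximum cardinality of a minimal (with respect to inclusion) $k$TDS of $G$. The Cartesian product $G\,\Box\,H$ has vertex set $V(G)\times V(H)$, with $(g_1,h_1)\sim(g_2,h_2)$ iff either $g_1=g_2$ and $h_1h_2\in E(H)$, or $h_1=h_2$ and $g_1g_2\in E(G)$. *)

theory Defs
  imports Main
begin

text \<open>A finite simple graph is given by a vertex set V and a symmetric, irreflexive
adjacency relation E (only its restriction to V matters).\<close>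

definition open_nbhd :: "'a set \<Rightarrow> ('a \<Rightarrow> 'a \<Rightarrow> bool) \<Rightarrow> 'a \<Rightarrow> 'a set" where
  "open_nbhd V E x = {y \<in> V. E x y}"

definition is_kTDS :: "nat \<Rightarrow> 'a set \<Rightarrow> ('a \<Rightarrow> 'a \<Rightarrow> bool) \<Rightarrow> 'a set \<Rightarrow> bool" where
  "is_kTDS k V E S \<longleftrightarrow> S \<subseteq> V \<and> (\<forall>x\<in>V. card (open_nbhd V E x \<inter> S) \<ge> k)"

definition is_minimal_kTDS :: "nat \<Rightarrow> 'a set \<Rightarrow> ('a \<Rightarrow> 'a \<Rightarrow> bool) \<Rightarrow> 'a set \<Rightarrow> bool" where
  "is_minimal_kTDS k V E S \<longleftrightarrow> is_kTDS k V E S \<and> (\<forall>T. T \<subset> S \<longrightarrow> \<not> is_kTDS k V E T)"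

text \<open>Upper k-tuple total domination number: maximum cardinality of a minimal kTDS
(meaningful for finite graphs with minimum degree at least k).\<close>
definition upper_ktuple_total_dom :: "nat \<Rightarrow> 'a set \<Rightarrow> ('a \<Rightarrow> 'a \<Rightarrow> bool) \<Rightarrow> nat" where
  "upper_ktuple_total_dom k V E = Max {card S | S. is_minimal_kTDS k V E S}"

definition complete_V :: "nat \<Rightarrow> nat set" where
  "complete_V n = {0..<n}"

definition complete_E :: "nat \<Rightarrow> nat \<Rightarrow> bool" where
  "complete_E x y \<longleftrightarrow> x \<noteq> y"

definition cart_V :: "'a set \<Rightarrow> 'b set \<Rightarrow> ('a \<times> 'b) set" where
  "cart_V V1 V2 = V1 \<times> V2"

definition cart_E :: "('a \<Rightarrow> 'a \<Rightarrow> bool) \<Rightarrow> ('b \<Rightarrow> 'b \<Rightarrow> bool) \<Rightarrow> ('a \<times> 'b) \<Rightarrow> ('a \<times> 'b) \<Rightarrow> bool" where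
  "cart_E E1 E2 p q \<longleftrightarrow>
     (fst p = fst q \<and> E2 (snd p) (snd q)) \<or> (snd p = snd q \<and> E1 (fst p) (fst q))"

end

theory Submission
  imports Defs
begin

text \<open>Let S be a minimal kTDS of the rook graph K_{k+1} \<box> K_{k+1} with |S| > k(k+1), so
  that fewer than k+1 vertices lie outside S. By minimality every s \<in> S has a critical
  neighbour x, one with exactly k neighbours in S; hence |S| is at most k times the number of
  critical vertices. Every vertex has degree 2k, so a critical vertex is adjacent to at least k,
  hence to all, of the vertices outside S. Two distinct vertices have at most k common
  neighbours, so there are at most k critical vertices and |S| \<le> k^2, a contradiction.
  The bound is attained by k full rows.\<close>

lemma minimal_kTDS_critical_vertex:
  assumes "is_minimal_kTDS k V E S" "s \<in> S" "finite V"
  shows "\<exists>x\<in>V. s \<in> open_nbhd V E x \<and> card (open_nbhd V E x \<inter> S) = k"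
proof -
  have kS: "is_kTDS k V E S" using assms(1) unfolding is_minimal_kTDS_def by auto
  have "\<not> is_kTDS k V E (S - {s})"
    using assms(1,2) unfolding is_minimal_kTDS_def by auto
  moreover have "S - {s} \<subseteq> V" using kS unfolding is_kTDS_def by auto
  ultimately obtain x where x: "x \<in> V" "card (open_nbhd V E x \<inter> (S - {s})) < k"
    unfolding is_kTDS_def by force
  have ge: "card (open_nbhd V E x \<inter> S) \<ge> k" using kS x(1) unfolding is_kTDS_def by auto
  have fin: "finite (open_nbhd V E x \<inter> S)" using assms(3) by (auto simp: open_nbhd_def)
  have removed: "open_nbhd V E x \<inter> (S - {s}) = (open_nbhd V E x \<inter> S) - {s}" by auto
  show ?thesis
  proof (cases "s \<in> open_nbhd V E x")
    case True
    then have "card (open_nbhd V E x \<inter> (S - {s})) = card (open_nbhd V E x \<inter> S) - 1"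
      using removed assms(2) by (simp add: fin)
    then show ?thesis using x ge True by auto
  next
    case False
    then have "open_nbhd V E x \<inter> (S - {s}) = open_nbhd V E x \<inter> S" by auto
    then show ?thesis using x ge by auto
  qed
qed

lemma minimal_kTDS_card_le_critical:
  assumes "is_minimal_kTDS k V E S" "finite V"
  shows "card S \<le> k * card {x\<in>V. card (open_nbhd V E x \<inter> S) = k}"
    (is "_ \<le> k * card ?C")
proof -
  have "S \<subseteq> (\<Union>x\<in>?C. open_nbhd V E x \<inter> S)"
    using minimal_kTDS_critical_vertex[OF assms(1) _ assms(2)] by blast
  moreover have "finite (\<Union>x\<in>?C. open_nbhd V E x \<inter> S)"
    using assms(2) by (auto simp: open_nbhd_def)
  ultimately have "card S \<le> card (\<Union>x\<in>?C. open_nbhd V E x \<inter> S)"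
    by (rule card_mono[rotated])
  also have "\<dots> \<le> (\<Sum>x\<in>?C. card (open_nbhd V E x \<inter> S))"
    using assms(2) by (intro card_UN_le) simp
  also have "\<dots> = k * card ?C" by simp
  finally show ?thesis .
qed

abbreviation rook_V :: "nat \<Rightarrow> (nat \<times> nat) set" where
  "rook_V n \<equiv> {0..<n} \<times> {0..<n}"

abbreviation rook_E :: "nat \<times> nat \<Rightarrow> nat \<times> nat \<Rightarrow> bool" where
  "rook_E \<equiv> cart_E complete_E complete_E"

abbreviation rook_nbhd :: "nat \<Rightarrow> nat \<times> nat \<Rightarrow> (nat \<times> nat) set" where
  "rook_nbhd n \<equiv> open_nbhd (rook_V n) rook_E"

lemma rook_nbhd_eq:
  assumes "a < n" "b < n"
  shows "rook_nbhd n (a, b) = {a} \<times> ({0..<n} - {b}) \<union> ({0..<n} - {a}) \<times> {b}"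
  using assms by (auto simp: open_nbhd_def cart_E_def complete_E_def)

lemma card_rook_nbhd:
  assumes "a < n" "b < n"
  shows "card (rook_nbhd n (a, b)) = 2 * (n - 1)"
proof -
  have "card ({a} \<times> ({0..<n} - {b}) \<union> ({0..<n} - {a}) \<times> {b})
      = card ({a} \<times> ({0..<n} - {b})) + card (({0..<n} - {a}) \<times> {b})"
    by (rule card_Un_disjoint) auto
  also have "\<dots> = 2 * (n - 1)" using assms by (simp add: card_cartesian_product)
  finally show ?thesis using rook_nbhd_eq[OF assms] by simp
qed

lemma rook_nbhd_sym:
  assumes "x \<in> rook_nbhd n y" "y \<in> rook_V n"
  shows "y \<in> rook_nbhd n x"
  using assms by (auto simp: open_nbhd_def cart_E_def complete_E_def)

lemma card_rook_common_nbhd_le: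
  assumes "a1 < n" "b1 < n" "a2 < n" "b2 < n" "(a1, b1) \<noteq> (a2, b2)" "n \<ge> 3"
  shows "card (rook_nbhd n (a1, b1) \<inter> rook_nbhd n (a2, b2)) \<le> n - 1"
proof -
  let ?I = "rook_nbhd n (a1, b1) \<inter> rook_nbhd n (a2, b2)"
  have I: "?I = ({a1} \<times> ({0..<n} - {b1}) \<union> ({0..<n} - {a1}) \<times> {b1})
              \<inter> ({a2} \<times> ({0..<n} - {b2}) \<union> ({0..<n} - {a2}) \<times> {b2})"
    using rook_nbhd_eq assms by simp
  consider "a1 = a2" | "b1 = b2" | "a1 \<noteq> a2" "b1 \<noteq> b2" by blast
  then show ?thesis
  proof cases
    case 1
    then have "?I \<subseteq> {a1} \<times> ({0..<n} - {b1})" unfolding I using assms(5) by auto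
    then have "card ?I \<le> card ({a1} \<times> ({0..<n} - {b1}))" by (intro card_mono) auto
    then show ?thesis using assms by (simp add: card_cartesian_product)
  next
    case 2
    then have "?I \<subseteq> ({0..<n} - {a1}) \<times> {b1}" unfolding I using assms(5) by auto
    then have "card ?I \<le> card (({0..<n} - {a1}) \<times> {b1})" by (intro card_mono) auto
    then show ?thesis using assms by (simp add: card_cartesian_product)
  next
    case 3
    then have "?I \<subseteq> {(a1, b2), (a2, b1)}" unfolding I by auto
    then have "card ?I \<le> card {(a1, b2), (a2, b1)}" by (intro card_mono) auto
    also have "\<dots> \<le> 2" by (simp add: card_insert_le_m1)
    finally show ?thesis using assms by simp
  qed
qed

lemma rook_minimal_kTDS_card_le:
  assumes k: "k \<ge> 2" and S: "is_minimal_kTDS k (rook_V (k + 1)) rook_E S"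
  shows "card S \<le> k * (k + 1)"
proof (rule ccontr)
  assume big: "\<not> card S \<le> k * (k + 1)"
  define n where "n = k + 1"
  define T where "T = rook_V n - S"
  define C where "C = {x \<in> rook_V n. card (rook_nbhd n x \<inter> S) = k}"
  have S': "is_minimal_kTDS k (rook_V n) rook_E S" using S by (simp add: n_def)
  have SV: "S \<subseteq> rook_V n" using S' unfolding is_minimal_kTDS_def is_kTDS_def by auto
  have finT: "finite T" by (simp add: T_def)
  have "card T = n * n - card S"
    using SV finite_subset[OF SV] by (simp add: T_def card_Diff_subset card_cartesian_product)
  then have cardT: "card T \<le> k" using big by (simp add: n_def algebra_simps)
  have critical_sees_T: "T \<subseteq> rook_nbhd n x \<and> card T = k" if "x \<in> C" for x
  proof -
    obtain a b where x: "x = (a, b)" "a < n" "b < n"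
      using \<open>x \<in> C\<close> by (cases x) (auto simp: C_def)
    have NV: "rook_nbhd n x \<subseteq> rook_V n" by (auto simp: open_nbhd_def)
    then have "rook_nbhd n x = (rook_nbhd n x \<inter> S) \<union> (rook_nbhd n x \<inter> T)"
      by (auto simp: T_def)
    moreover have "card ((rook_nbhd n x \<inter> S) \<union> (rook_nbhd n x \<inter> T))
        = card (rook_nbhd n x \<inter> S) + card (rook_nbhd n x \<inter> T)"
      using finite_subset[OF NV] by (intro card_Un_disjoint) (auto simp: T_def)
    ultimately have "card (rook_nbhd n x) = card (rook_nbhd n x \<inter> S) + card (rook_nbhd n x \<inter> T)"
      by simp
    moreover have "card (rook_nbhd n x) = 2 * k"
      using card_rook_nbhd[OF x(2,3)] x(1) by (simp add: n_def)
    ultimately have "card (rook_nbhd n x \<inter> T) = k" using that by (simp add: C_def)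
    then have "rook_nbhd n x \<inter> T = T" using card_seteq[OF finT, of "rook_nbhd n x \<inter> T"] cardT
      by auto
    then show ?thesis using \<open>card (rook_nbhd n x \<inter> T) = k\<close> by auto
  qed
  have cardS: "card S \<le> k * card C"
    using minimal_kTDS_card_le_critical[OF S'] by (simp add: C_def)
  then have "C \<noteq> {}" using big by auto
  then have "card T = k" using critical_sees_T by blast
  then have "\<not> card T \<le> Suc 0" using k by simp
  then obtain t1 t2 where t: "t1 \<in> T" "t2 \<in> T" "t1 \<noteq> t2"
    using card_le_Suc0_iff_eq[OF finT] by blast
  obtain a1 b1 where t1: "t1 = (a1, b1)" "a1 < n" "b1 < n"
    using t(1) by (cases t1) (auto simp: T_def)
  obtain a2 b2 where t2: "t2 = (a2, b2)" "a2 < n" "b2 < n"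
    using t(2) by (cases t2) (auto simp: T_def)
  have "C \<subseteq> rook_nbhd n t1 \<inter> rook_nbhd n t2"
  proof
    fix x assume "x \<in> C"
    then have "t1 \<in> rook_nbhd n x" "t2 \<in> rook_nbhd n x" "x \<in> rook_V n"
      using critical_sees_T t by (auto simp: C_def)
    then show "x \<in> rook_nbhd n t1 \<inter> rook_nbhd n t2" using rook_nbhd_sym by blast
  qed
  then have "card C \<le> card (rook_nbhd n t1 \<inter> rook_nbhd n t2)"
    by (intro card_mono) (auto simp: open_nbhd_def)
  also have "\<dots> \<le> k"
    using card_rook_common_nbhd_le[OF t1(2,3) t2(2,3)] t t1 t2 k by (simp add: n_def)
  finally have "card S \<le> k * k" using cardS by (meson le_trans mult_le_mono2)
  then show False using big by (simp add: algebra_simps)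
qed

lemma rook_rows_minimal_kTDS:
  assumes "0 < k" "k < n"
  shows "is_minimal_kTDS k (rook_V n) rook_E ({0..<k} \<times> {0..<n})"
proof -
  define S where "S = {0..<k} \<times> {0..<n}"
  have kS: "is_kTDS k (rook_V n) rook_E S"
    unfolding is_kTDS_def
  proof (intro conjI ballI)
    show "S \<subseteq> rook_V n" using assms by (auto simp: S_def)
  next
    fix x assume "x \<in> rook_V n"
    then obtain a b where x: "x = (a, b)" "a < n" "b < n" by auto
    show "k \<le> card (rook_nbhd n x \<inter> S)"
    proof (cases "a < k")
      case True
      have "{a} \<times> ({0..<n} - {b}) \<subseteq> rook_nbhd n x \<inter> S"
        using rook_nbhd_eq x True by (auto simp: S_def)
      then have "card ({a} \<times> ({0..<n} - {b})) \<le> card (rook_nbhd n x \<inter> S)"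
        by (intro card_mono) (auto simp: S_def)
      then show ?thesis using x assms by (simp add: card_cartesian_product)
    next
      case False
      have "{0..<k} \<times> {b} \<subseteq> rook_nbhd n x \<inter> S"
        using rook_nbhd_eq x False assms by (auto simp: S_def)
      then have "card ({0..<k} \<times> {b}) \<le> card (rook_nbhd n x \<inter> S)"
        by (intro card_mono) (auto simp: S_def)
      then show ?thesis by (simp add: card_cartesian_product)
    qed
  qed
  have "\<not> is_kTDS k (rook_V n) rook_E T" if "T \<subset> S" for T
  proof
    assume kT: "is_kTDS k (rook_V n) rook_E T"
    obtain y where "y \<in> S - T" using psubset_imp_ex_mem[OF \<open>T \<subset> S\<close>] by blast
    then obtain a b where ab: "(a, b) \<in> S" "(a, b) \<notin> T" by (cases y) blast
    then have "a < k" "b < n" by (auto simp: S_def)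
    \<comment> \<open>removing (a, b) starves the vertex (k, b) below the full rows\<close>
    have "rook_nbhd n (k, b) \<inter> T \<subseteq> rook_nbhd n (k, b) \<inter> (S - {(a, b)})"
      using \<open>T \<subset> S\<close> ab(2) by blast
    also have "\<dots> = ({0..<k} - {a}) \<times> {b}"
      unfolding rook_nbhd_eq[OF \<open>k < n\<close> \<open>b < n\<close>] S_def using \<open>a < k\<close> \<open>k < n\<close> \<open>b < n\<close> by auto
    finally have "rook_nbhd n (k, b) \<inter> T \<subseteq> ({0..<k} - {a}) \<times> {b}" .
    then have "card (rook_nbhd n (k, b) \<inter> T) \<le> card (({0..<k} - {a}) \<times> {b})"
      by (intro card_mono) auto
    also have "\<dots> < k" using \<open>a < k\<close> by (simp add: card_cartesian_product)
    finally have "card (rook_nbhd n (k, b) \<inter> T) < k" .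
    moreover have "(k, b) \<in> rook_V n" using \<open>b < n\<close> assms by simp
    ultimately show False using kT unfolding is_kTDS_def by (meson not_le)
  qed
  then show ?thesis using kS unfolding is_minimal_kTDS_def S_def by simp
qed

theorem mainTheorem9:
  fixes k :: nat
  assumes "k \<ge> 2"
  shows "upper_ktuple_total_dom k
           (cart_V (complete_V (k + 1)) (complete_V (k + 1)))
           (cart_E complete_E complete_E) = k * (k + 1)"
proof -
  let ?A = "{card S | S. is_minimal_kTDS k (rook_V (k + 1)) rook_E S}"
  have bounded: "c \<le> k * (k + 1)" if "c \<in> ?A" for c
    using that rook_minimal_kTDS_card_le[OF assms] by blast
  then have "finite ?A" by (meson finite_atMost atMost_iff finite_subset subsetI)
  moreover have "k * (k + 1) \<in> ?A"
  proof -
    have "is_minimal_kTDS k (rook_V (k + 1)) rook_E ({0..<k} \<times> {0..<k + 1})"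
      using rook_rows_minimal_kTDS assms by simp
    moreover have "card ({0..<k} \<times> {0..<k + 1}) = k * (k + 1)" by (simp add: card_cartesian_product)
    ultimately show ?thesis unfolding mem_Collect_eq by metis
  qed
  ultimately have "Max ?A = k * (k + 1)" using bounded by (intro Max_eqI)
  then show ?thesis unfolding upper_ktuple_total_dom_def cart_V_def complete_V_def .
qed

end
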